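(* Let $0<d\le n$ be integers with $n$ and $d$ even. Then \[ A_2(n/2,\,d/2)\;\le\; M_1(n,d;1)\;\le\; A_4(n,d). \]
   Context: Sequences are words over the DNA alphabet $\{\mathtt A,\mathtt T,\mathtt C,\mathtt G\}$. Hamming distance between two words of equal length is the number of positions where they differ. For $D>0$, a word is called $D$-GC-prefix-balanced ($D$-GCPB) if for every prefix of it (including the whole word), the absolute difference between the number of symbols from $\{\mathtt G,\mathtt C\}$ and the number of symbols from $\{\mathtt A,\mathtt T\}$ in that prefix is at most $D$; a set of words is $D$-GCPB if all its words are. For $0<d\le n$ and $D>0$, $M_1(n,d;D)$ denotes the maximum size of a $D$-GCPB set of words of length $n$ over $\{\mathtt A,\mathtt T,\mathtt C,\mathtt G\}$ with minimum pairwise Hamming distance at least $d$. For an integer $q>1$, $A_q(n,d)$ denotes the maximum size of a code of length $n$ over a $q$-ary alphabet with minimum Hamming distance $d$. *)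

theory Defs
  imports Main
begin

datatype dna = nA | nT | nC | nG

text \<open>Hamming distance between two words (intended for words of equal length).\<close>
definition hamming :: "'a list \<Rightarrow> 'a list \<Rightarrow> nat" where
  "hamming x y = card {i. i < length x \<and> x ! i \<noteq> y ! i}"

definition is_GC :: "dna \<Rightarrow> bool" where
  "is_GC s \<longleftrightarrow> s = nG \<or> s = nC"

definition gc_excess :: "dna list \<Rightarrow> int" where
  "gc_excess w = int (length (filter is_GC w)) - int (length (filter (\<lambda>s. \<not> is_GC s) w))"

definition GCPB :: "nat \<Rightarrow> dna list \<Rightarrow> bool" where
  "GCPB D w \<longleftrightarrow> (\<forall>k \<le> length w. \<bar>gc_excess (take k w)\<bar> \<le> int D)"

definition min_dist_ge :: "'a list set \<Rightarrow> nat \<Rightarrow> bool" where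
  "min_dist_ge C d \<longleftrightarrow> (\<forall>x\<in>C. \<forall>y\<in>C. x \<noteq> y \<longrightarrow> hamming x y \<ge> d)"

definition qcode :: "nat \<Rightarrow> nat \<Rightarrow> nat \<Rightarrow> nat list set \<Rightarrow> bool" where
  "qcode q n d C \<longleftrightarrow> (\<forall>w\<in>C. length w = n \<and> set w \<subseteq> {0..<q}) \<and> min_dist_ge C d"

definition A_q :: "nat \<Rightarrow> nat \<Rightarrow> nat \<Rightarrow> nat" where
  "A_q q n d = Max {card C | C. qcode q n d C}"

definition M1 :: "nat \<Rightarrow> nat \<Rightarrow> nat \<Rightarrow> nat" where
  "M1 n d D = Max {card C | C. (\<forall>w\<in>C. length w = n \<and> GCPB D w) \<and> min_dist_ge C d}"

end

theory Submission
  imports Defs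
begin

text \<open>Lower bound: encode bit 0 as AG and bit 1 as TC. Every prefix of such a word has
  GC-excess 0 or -1, and the encoding exactly doubles Hamming distances. Upper bound: a
  DNA word is a word over a four-letter alphabet.\<close>

lemma hamming_Nil [simp]: "hamming [] y = 0"
  by (simp add: hamming_def)

lemma hamming_self [simp]: "hamming x x = 0"
  by (simp add: hamming_def)

lemma hamming_Cons [simp]:
  "hamming (a # x) (b # y) = (if a = b then 0 else 1) + hamming x y"
proof -
  let ?D = "{i. i < length x \<and> x ! i \<noteq> y ! i}"
  have split: "{i. i < length (a # x) \<and> (a # x) ! i \<noteq> (b # y) ! i}
      = (if a = b then {} else {0}) \<union> Suc ` ?D"
    by (auto simp: less_Suc_eq_0_disj)
  have "card ((if a = b then {} else {0}) \<union> Suc ` ?D)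
      = card (if a = b then {} else {0::nat}) + card (Suc ` ?D)"
    by (rule card_Un_disjoint) auto
  then show ?thesis
    unfolding hamming_def split by (simp add: card_image)
qed

lemma hamming_append:
  "length x = length y \<Longrightarrow> hamming (x @ x') (y @ y') = hamming x y + hamming x' y'"
  by (induction x y rule: list_induct2) auto

lemma hamming_map:
  assumes "inj f" "length x = length y"
  shows "hamming (map f x) (map f y) = hamming x y"
  using assms(2) by (induction x y rule: list_induct2) (auto dest: injD[OF assms(1)])

lemma inj_on_if_hamming_scaled:
  assumes "min_dist_ge C d" "0 < d" "0 < k"
    and "\<And>x y. x \<in> C \<Longrightarrow> y \<in> C \<Longrightarrow> hamming (f x) (f y) = k * hamming x y"
  shows "inj_on f C"
proof
  fix x y assume xy: "x \<in> C" "y \<in> C" "f x = f y"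
  show "x = y"
  proof (rule ccontr)
    assume "x \<noteq> y"
    with assms(1) xy have "0 < hamming x y"
      using assms(2) by (fastforce simp: min_dist_ge_def)
    with assms(3) assms(4)[OF xy(1,2)] xy(3) show False by simp
  qed
qed

lemma min_dist_ge_image_scaled:
  assumes "min_dist_ge C d"
    and "\<And>x y. x \<in> C \<Longrightarrow> y \<in> C \<Longrightarrow> hamming (f x) (f y) = k * hamming x y"
  shows "min_dist_ge (f ` C) (k * d)"
  unfolding min_dist_ge_def
proof (intro ballI impI)
  fix u v assume "u \<in> f ` C" "v \<in> f ` C" "u \<noteq> v"
  then obtain x y where "x \<in> C" "y \<in> C" "x \<noteq> y" "u = f x" "v = f y" by auto
  with assms show "k * d \<le> hamming u v" by (auto simp: min_dist_ge_def)
qed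

lemma card_le_Max_card:
  assumes "finite W" "\<And>C. P C \<Longrightarrow> C \<subseteq> W" "P C"
  shows "card C \<le> Max {card C | C. P C}"
proof -
  have "{card C | C. P C} \<subseteq> card ` Pow W" using assms(2) by auto
  then have "finite {card C | C. P C}" using assms(1) finite_subset by blast
  with assms(3) show ?thesis by (auto intro: Max_ge)
qed

lemma Max_card_attained:
  assumes "finite W" "\<And>C. P C \<Longrightarrow> C \<subseteq> W" "P {}"
  obtains C where "P C" "card C = Max {card C | C. P C}"
proof -
  have "{card C | C. P C} \<subseteq> card ` Pow W" using assms(2) by auto
  then have "finite {card C | C. P C}" using assms(1) finite_subset by blast
  moreover have "{card C | C. P C} \<noteq> {}" using assms(3) by auto
  ultimately have "Max {card C | C. P C} \<in> {card C | C. P C}" by (rule Max_in)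
  then show ?thesis using that by auto
qed

lemma qcode_subset_words: "qcode q n d C \<Longrightarrow> C \<subseteq> {w. set w \<subseteq> {0..<q} \<and> length w = n}"
  by (auto simp: qcode_def)

lemma finite_qary_words: "finite {w. set w \<subseteq> {0..<q::nat} \<and> length w = n}"
  by (rule finite_lists_length_eq) simp

lemma card_le_A_q: "qcode q n d C \<Longrightarrow> card C \<le> A_q q n d"
  unfolding A_q_def
  by (rule card_le_Max_card[OF finite_qary_words qcode_subset_words])

lemma A_q_attained:
  obtains C where "qcode q n d C" "card C = A_q q n d"
proof (rule Max_card_attained[OF finite_qary_words qcode_subset_words])
  show "qcode q n d {}" by (simp add: qcode_def min_dist_ge_def)
next
  fix C assume "qcode q n d C" "card C = Max {card C | C. qcode q n d C}"
  then show thesis by (intro that) (simp_all add: A_q_def)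
qed

lemma finite_dna_words: "finite {w :: dna list. set w \<subseteq> UNIV \<and> length w = n}"
proof -
  have "(UNIV :: dna set) = {nA, nT, nC, nG}" using dna.exhaust by auto
  then show ?thesis by (intro finite_lists_length_eq) (metis finite.emptyI finite_insert)
qed

lemma card_le_M1:
  assumes "\<forall>w\<in>C. length w = n \<and> GCPB D w" "min_dist_ge C d"
  shows "card C \<le> M1 n d D"
  unfolding M1_def
  by (rule card_le_Max_card[OF finite_dna_words]) (use assms in auto)

lemma M1_attained:
  obtains C where "\<forall>w\<in>C. length w = n \<and> GCPB D w" "min_dist_ge C d" "card C = M1 n d D"
proof (rule Max_card_attained[OF finite_dna_words])
  show "(\<forall>w\<in>{}. length w = n \<and> GCPB D w) \<and> min_dist_ge {} d"
    by (simp add: min_dist_ge_def)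
next
  fix C assume "(\<forall>w\<in>C. length w = n \<and> GCPB D w) \<and> min_dist_ge C d"
    "card C = Max {card C | C. (\<forall>w\<in>C. length w = n \<and> GCPB D w) \<and> min_dist_ge C d}"
  then show thesis by (intro that) (simp_all add: M1_def)
qed auto

definition nat_of_dna :: "dna \<Rightarrow> nat" where
  "nat_of_dna s = (case s of nA \<Rightarrow> 0 | nT \<Rightarrow> 1 | nC \<Rightarrow> 2 | nG \<Rightarrow> 3)"

lemma inj_nat_of_dna: "inj nat_of_dna"
  unfolding inj_def nat_of_dna_def by (auto split: dna.splits)

lemma nat_of_dna_less_4: "nat_of_dna s < 4"
  unfolding nat_of_dna_def by (auto split: dna.splits)

definition dna_pair_of_bit :: "nat \<Rightarrow> dna list" where
  "dna_pair_of_bit b = (if b = 0 then [nA, nG] else [nT, nC])"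

definition dna_of_bits :: "nat list \<Rightarrow> dna list" where
  "dna_of_bits w = concat (map dna_pair_of_bit w)"

lemma dna_of_bits_Cons: "dna_of_bits (b # w) = dna_pair_of_bit b @ dna_of_bits w"
  by (simp add: dna_of_bits_def)

lemma length_dna_of_bits: "length (dna_of_bits w) = 2 * length w"
  by (induction w) (auto simp: dna_of_bits_def dna_pair_of_bit_def)

lemma gc_excess_append: "gc_excess (u @ v) = gc_excess u + gc_excess v"
  by (simp add: gc_excess_def)

lemma gc_excess_take_dna_of_bits: "gc_excess (take k (dna_of_bits w)) \<in> {-1, 0}"
proof (induction w arbitrary: k)
  case Nil
  then show ?case by (simp add: dna_of_bits_def gc_excess_def)
next
  case (Cons b w)
  consider "k = 0" | "k = 1" | k' where "k = Suc (Suc k')"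
    by (metis One_nat_def not0_implies_Suc)
  then show ?case
  proof cases
    case 3
    have "gc_excess (dna_pair_of_bit b) = 0"
      by (simp add: dna_pair_of_bit_def gc_excess_def is_GC_def)
    with Cons.IH[of k'] 3 show ?thesis
      by (simp add: dna_of_bits_Cons dna_pair_of_bit_def gc_excess_append)
  qed (simp_all add: dna_of_bits_Cons dna_pair_of_bit_def gc_excess_def is_GC_def)
qed

lemma GCPB_dna_of_bits: "GCPB 1 (dna_of_bits w)"
proof -
  have "\<bar>gc_excess (take k (dna_of_bits w))\<bar> \<le> 1" for k
    using gc_excess_take_dna_of_bits[of k w] by auto
  then show ?thesis unfolding GCPB_def by simp
qed

lemma hamming_dna_of_bits:
  assumes "length x = length y" "set x \<subseteq> {0..<2}" "set y \<subseteq> {0..<2}"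
  shows "hamming (dna_of_bits x) (dna_of_bits y) = 2 * hamming x y"
  using assms
  by (induction x y rule: list_induct2)
    (auto simp: dna_of_bits_def hamming_append dna_pair_of_bit_def)

theorem theorem2:
  fixes n d :: nat
  assumes "0 < d" and "d \<le> n" and "even n" and "even d"
  shows "A_q 2 (n div 2) (d div 2) \<le> M1 n d 1 \<and> M1 n d 1 \<le> A_q 4 n d"
proof
  obtain C where C: "qcode 2 (n div 2) (d div 2) C" and A2: "card C = A_q 2 (n div 2) (d div 2)"
    by (rule A_q_attained)
  have dist: "min_dist_ge C (d div 2)" using C by (simp add: qcode_def)
  have scaled: "x \<in> C \<Longrightarrow> y \<in> C \<Longrightarrow>
      hamming (dna_of_bits x) (dna_of_bits y) = 2 * hamming x y" for x y
    using C by (auto simp: qcode_def intro!: hamming_dna_of_bits)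
  have "card (dna_of_bits ` C) \<le> M1 n d 1"
  proof (rule card_le_M1)
    show "\<forall>w\<in>dna_of_bits ` C. length w = n \<and> GCPB 1 w"
      using C \<open>even n\<close> GCPB_dna_of_bits by (auto simp: qcode_def length_dna_of_bits)
    show "min_dist_ge (dna_of_bits ` C) d"
      using min_dist_ge_image_scaled[OF dist scaled] \<open>even d\<close> by simp
  qed
  moreover have "inj_on dna_of_bits C"
    by (rule inj_on_if_hamming_scaled[OF dist _ _ scaled]) (use assms in auto)
  ultimately show "A_q 2 (n div 2) (d div 2) \<le> M1 n d 1"
    using A2 card_image by metis
next
  obtain C where C: "\<forall>w\<in>C. length w = n \<and> GCPB 1 w" "min_dist_ge C d" and M: "card C = M1 n d 1"
    by (rule M1_attained)
  have scaled: "x \<in> C \<Longrightarrow> y \<in> C \<Longrightarrow>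
      hamming (map nat_of_dna x) (map nat_of_dna y) = 1 * hamming x y" for x y
    using C(1) by (simp add: hamming_map inj_nat_of_dna)
  have "qcode 4 n d (map nat_of_dna ` C)"
    using C min_dist_ge_image_scaled[OF C(2) scaled] nat_of_dna_less_4
    by (auto simp: qcode_def)
  moreover have "inj_on (map nat_of_dna) C"
    using inj_nat_of_dna by (simp add: inj_on_def inj_map_eq_map)
  ultimately show "M1 n d 1 \<le> A_q 4 n d"
    using M card_le_A_q card_image by metis
qed

end
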